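(* Let $Q$ satisfy (Q1)–(Q4) and let $M>0$, $n_1:=k_1+3/2$. There is a constant $C>0$ such that $\mathcal H_C(f)\ge\mathcal P(f)-C(1+\mathcal P(f))^{n_1/3}$ for all $f\in\mathcal F_M$. In particular $h_M:=\inf_{\mathcal F_M}\mathcal H_C>-\infty$.
   Context: Standing assumptions on $Q$: $Q\in C^1([0,\infty))\cap C^2((0,\infty))$, $Q\ge0$, and there are constants $C_1,C_2>0$, $F_0>0$, $0<k_1,k_2,k_3<3/2$ with: (Q1) $Q(f)\ge C_1f^{1+1/k_1}$ for $f\ge F_0$; (Q2) $Q(f)\le C_2 f^{1+1/k_2}$ for $0\le f\le F_0$; (Q3) $Q(\lambda f)\ge\lambda^{1+1/k_3}Q(f)$ for $f\ge0$, $0\le\lambda\le1$; (Q4) $Q''(f)>0$ for $f>0$ and $Q'(0)=0$. For measurable $f=f(x,v)\ge0$ on $\mathbb R^3\times\mathbb R^3$: $\rho_f(x)=\int f(x,v)\,dv$, $U_f=-\rho_f*\frac1{|\cdot|}$, $E_{kin}(f)=\frac12\iint|v|^2f\,dv\,dx$, $E_{pot}(f)=-\frac1{8\pi}\int|\nabla U_f|^2dx=-\frac12\iint\frac{\rho_f(x)\rho_f(y)}{|x-y|}dx\,dy$, $\mathcal C(f)=\iint Q(f(x,v))\,dv\,dx$, $\mathcal P(f)=\mathcal C(f)+E_{kin}(f)$, $\mathcal H_C(f)=\mathcal P(f)+E_{pot}(f)$. For $M>0$, $\mathcal F_M=\{f\in L^1(\mathbb R^6): f\ge0,\ \iint f\,dv\,dx=M,\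 \mathcal P(f)<\infty\}$. *)

theory Defs
  imports "HOL-Analysis.Analysis"
begin

text \<open>All energies are defined as nonnegative (possibly infinite) integrals in ennreal;
  the potential energy is E_pot = - Epot_abs.\<close>

type_synonym pdens = "real^3 \<Rightarrow> real^3 \<Rightarrow> real"

definition rho :: "pdens \<Rightarrow> real^3 \<Rightarrow> ennreal" where
  "rho f x = (\<integral>\<^sup>+ v. ennreal (f x v) \<partial>lborel)"

definition Ekin :: "pdens \<Rightarrow> ennreal" where
  "Ekin f = (\<integral>\<^sup>+ z. ennreal ((1/2) * (norm (snd z))\<^sup>2 * f (fst z) (snd z)) \<partial>(lborel :: ((real^3) \<times> (real^3)) measure))"

definition Cas :: "(real \<Rightarrow> real) \<Rightarrow> pdens \<Rightarrow> ennreal" where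
  "Cas Q f = (\<integral>\<^sup>+ z. ennreal (Q (f (fst z) (snd z))) \<partial>(lborel :: ((real^3) \<times> (real^3)) measure))"

definition Pfun :: "(real \<Rightarrow> real) \<Rightarrow> pdens \<Rightarrow> ennreal" where
  "Pfun Q f = Cas Q f + Ekin f"

definition Epot_abs :: "pdens \<Rightarrow> ennreal" where
  "Epot_abs f = ennreal (1/2) * (\<integral>\<^sup>+ x. \<integral>\<^sup>+ y. rho f x * rho f y * ennreal (1 / norm (x - y)) \<partial>lborel \<partial>lborel)"

definition HC :: "(real \<Rightarrow> real) \<Rightarrow> pdens \<Rightarrow> ereal" where
  "HC Q f = enn2ereal (Pfun Q f) - enn2ereal (Epot_abs f)"

definition FM :: "(real \<Rightarrow> real) \<Rightarrow> real \<Rightarrow> pdens set" where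
  "FM Q M = {f. (\<forall>x v. 0 \<le> f x v)
      \<and> integrable (lborel :: ((real^3) \<times> (real^3)) measure) (\<lambda>z. f (fst z) (snd z))
      \<and> (\<integral> z. f (fst z) (snd z) \<partial>(lborel :: ((real^3) \<times> (real^3)) measure)) = M
      \<and> Pfun Q f < \<infinity>}"

end

theory Submission
  imports Defs
begin

text \<open>Splitting the velocity integral at \<open>|v| = R\<close> and using (Q1) for large values of \<open>f\<close> gives
  \<open>\<rho>(x) \<lesssim> R\<^sup>3 + R\<^sup>2\<^sup>k\<^sup>+\<^sup>3 + R\<^sup>-\<^sup>2 T(x)\<close> with \<open>T(x) = \<integral> Q(f)/C\<^sub>1 + |v|\<^sup>2 f dv\<close>; optimising in \<open>R\<close>
  yields \<open>\<rho>\<^sup>1\<^sup>+\<^sup>1\<^sup>/\<^sup>n \<lesssim> \<rho> + T\<close> with \<open>n = k\<^sub>1 + 3/2\<close>, so \<open>\<rho>\<close> is controlled in \<open>L\<^sup>1\<^sup>+\<^sup>1\<^sup>/\<^sup>n\<close> by \<open>M + \<P>(f)\<close>.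
  The Coulomb kernel is split as \<open>1/|z| \<le> 1\<^bsub>|z|<d\<^esub>/|z| + 1/d\<close>: the far part contributes at most
  \<open>M\<^sup>2/d\<close>, the near part is bounded by a pointwise three-term Young inequality (a weighted form of
  Young's convolution inequality). Choosing \<open>d\<close> and the Young weights as powers of \<open>1 + \<P>(f)\<close> gives
  \<open>-E\<^sub>p\<^sub>o\<^sub>t(f) \<le> C (1 + \<P>(f))\<^sup>n\<^sup>/\<^sup>3\<close>, which grows sublinearly because \<open>n < 3\<close>; hence \<open>\<H>\<^sub>C\<close> is
  bounded below. Only (Q1), \<open>Q \<ge> 0\<close> and the continuity of \<open>Q\<close> are used.\<close>

lemma weighted_amgm_three:
  fixes u v w a b :: real
  assumes "0 \<le> u" "0 \<le> v" "0 \<le> w" "0 < a" "0 < b" "2 * a + b = 1"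
  shows "u powr a * v powr a * w powr b \<le> a * u + a * v + b * w"
proof (cases "u = 0 \<or> v = 0 \<or> w = 0")
  case True
  then show ?thesis using assms by (auto intro!: add_nonneg_nonneg)
next
  case False
  then have pos: "u > 0" "v > 0" "w > 0" using assms by auto
  have "u powr a * v powr a = sqrt (u * v) powr (2 * a)"
    using pos by (simp add: sqrt_def root_powr_inverse powr_powr powr_mult)
  moreover have "sqrt (u * v) powr (2 * a) * w powr b \<le> 2 * a * sqrt (u * v) + b * w"
    using Youngs_inequality_0[of "2 * a" b "sqrt (u * v)" w] pos assms by auto
  moreover have "a * (2 * sqrt (u * v)) \<le> a * (u + v)"
    using pos arith_geo_mean_sqrt[of u v] assms(4) by (intro mult_left_mono) (auto simp: real_sqrt_mult)
  ultimately show ?thesis by (simp add: algebra_simps)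
qed

text \<open>A pointwise form of Young's convolution inequality: weighted AM-GM with weights \<open>s, s, t\<close>.\<close>

lemma three_term_young:
  fixes a b k A B lam mu s t p r :: real
  assumes "0 \<le> a" "0 \<le> b" "0 \<le> k" "a powr p \<le> A" "b powr p \<le> B" "0 < lam" "0 < mu"
    "lam powr (2 * s) * mu powr t = 1" "r * (2 * s) = 1" "p * (s + t) = 1" "0 < s" "0 < t" "2 * s + t = 1"
  shows "a * b * k \<le> s * (lam * k powr r * A) + s * (lam * k powr r * B) + t * (mu * A * B)"
proof -
  have p: "p > 0" using assms(10-12) by (smt (verit) mult_nonpos_nonneg)
  have A0: "A \<ge> 0" "B \<ge> 0" using assms(4,5) by (smt (verit) powr_ge_zero)+
  have root_le: "c \<le> C powr (1 / p)" if "0 \<le> c" "c powr p \<le> C" for c C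
  proof -
    have "c = (c powr p) powr (1 / p)" using p that by (simp add: powr_powr)
    also have "\<dots> \<le> C powr (1 / p)" using that p by (intro powr_mono2) auto
    finally show ?thesis .
  qed
  have st: "s + t = 1 / p" using assms(10) p by (simp add: field_simps)
  have "(lam * k powr r * A) powr s * (lam * k powr r * B) powr s * (mu * A * B) powr t
      = (lam powr s * lam powr s * mu powr t) * ((k powr r) powr s * (k powr r) powr s)
        * (A powr s * A powr t) * (B powr s * B powr t)"
    using assms A0 by (simp add: powr_mult mult_ac)
  also have "\<dots> = k * A powr (1 / p) * B powr (1 / p)"
    using assms(3,8,9) st by (simp add: powr_powr powr_add[symmetric] mult_ac)
  finally have eq: "(lam * k powr r * A) powr s * (lam * k powr r * B) powr s * (mu * A * B) powr t
      = k * A powr (1 / p) * B powr (1 / p)" .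
  have "a * b * k \<le> A powr (1 / p) * B powr (1 / p) * k"
    using root_le[OF assms(1,4)] root_le[OF assms(2,5)] assms by (intro mult_mono) auto
  also have "\<dots> \<le> s * (lam * k powr r * A) + s * (lam * k powr r * B) + t * (mu * A * B)"
    using weighted_amgm_three[of "lam * k powr r * A" "lam * k powr r * B" "mu * A * B" s t] eq assms A0
    by (simp add: mult_ac)
  finally show ?thesis .
qed

definition enn_powr_le :: "real \<Rightarrow> ennreal \<Rightarrow> ennreal \<Rightarrow> bool" where
  "enn_powr_le p a A \<longleftrightarrow> (a = \<infinity> \<longrightarrow> A = \<infinity>) \<and> (a \<noteq> \<infinity> \<longrightarrow> ennreal (enn2real a powr p) \<le> A)"

lemma three_term_young_ennreal:
  fixes a b A B :: ennreal and k lam mu s t p r :: real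
  assumes ab: "enn_powr_le p a A" "enn_powr_le p b B" and k: "0 \<le> k"
    and prm: "0 < lam" "0 < mu" "lam powr (2 * s) * mu powr t = 1" "r * (2 * s) = 1" "p * (s + t) = 1"
      "0 < s" "0 < t" "2 * s + t = 1"
  shows "a * b * ennreal k
    \<le> ennreal (s * lam * k powr r) * A + ennreal (s * lam * k powr r) * B + ennreal (t * mu) * A * B"
proof (cases "k = 0 \<or> a = 0 \<or> b = 0")
  case True
  then show ?thesis by auto
next
  case False
  then have "s * lam * k powr r > 0" using k prm by simp
  show ?thesis
  proof (cases "A = \<infinity> \<or> B = \<infinity>")
    case True
    with \<open>s * lam * k powr r > 0\<close> show ?thesis by (auto simp: ennreal_mult_top)
  next
    case False
    then have "a \<noteq> \<infinity>" "b \<noteq> \<infinity>" using ab unfolding enn_powr_le_def by auto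
    then obtain a' b' A' B' where reals: "a = ennreal a'" "b = ennreal b'" "A = ennreal A'" "B = ennreal B'"
      and nonneg: "0 \<le> a'" "0 \<le> b'" "0 \<le> A'" "0 \<le> B'"
      using False by (metis ennreal_cases infinity_ennreal_def)
    have "a' powr p \<le> A'" "b' powr p \<le> B'"
      using ab reals nonneg unfolding enn_powr_le_def by simp_all
    then have "a' * b' * k \<le> s * (lam * k powr r * A') + s * (lam * k powr r * B') + t * (mu * A' * B')"
      using three_term_young nonneg k prm by blast
    then have "ennreal (a' * b' * k)
        \<le> ennreal (s * lam * k powr r * A' + s * lam * k powr r * B' + t * mu * A' * B')"
      by (intro ennreal_leI) (simp add: algebra_simps)
    then show ?thesis
      using reals nonneg k prm by (simp add: ennreal_mult ennreal_plus[symmetric] mult.assoc)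
  qed
qed

lemma less_root_of_less_powr:
  fixes x K q :: real
  assumes "0 < x" "q < 1" "x < K * x powr q"
  shows "x < K powr (1 / (1 - q))"
proof -
  have "x powr (1 - q) * x powr q < K * x powr q"
    using assms by (simp add: powr_add[symmetric])
  then have "x powr (1 - q) < K" using assms(1) by simp
  then have "(x powr (1 - q)) powr (1 / (1 - q)) < K powr (1 / (1 - q))"
    using assms by (intro powr_less_mono2) auto
  then show ?thesis using assms by (simp add: powr_powr)
qed

text \<open>At the scale \<open>R\<close> where \<open>b R\<^sup>2\<^sup>n = x/4\<close>, either the \<open>T\<close>-term dominates, or
  \<open>x \<lesssim> R\<^sup>3 \<sim> x\<^sup>3\<^sup>/\<^sup>(\<^sup>2\<^sup>n\<^sup>)\<close>, which bounds \<open>x\<close> because \<open>n > 3/2\<close>.\<close>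

lemma powr_le_at_balanced_scale:
  fixes a b n x T R :: real
  assumes x: "0 < x" and T: "0 \<le> T" and b: "0 < b" and n: "3/2 < n"
    and R_def: "R = (x / (4 * b)) powr (1 / (2 * n))"
    and bound: "x \<le> a * R powr 3 + b * R powr (2 * n) + T / R powr 2"
  shows "x powr (1 + 1 / n) \<le> 2 * (4 * b) powr (1 / n) * T
    + ((4 * a * (4 * b) powr (- 3 / (2 * n))) powr (1 / (1 - 3 / (2 * n)))) powr (1 / n) * x"
    (is "_ \<le> ?cT * T + ?cx * x")
proof -
  have R: "0 < R" "b * R powr (2 * n) = x / 4" "R powr 2 = (x / (4 * b)) powr (1 / n)"
    "R powr 3 = (x / (4 * b)) powr (3 / (2 * n))"
    using x b n by (simp_all add: R_def powr_powr)
  show ?thesis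
  proof (cases "a * R powr 3 \<le> x / 4")
    case True
    then have "x / 2 \<le> T / R powr 2"
      using bound R(2) by linarith
    then have "x * R powr 2 \<le> 2 * T"
      using R(1) by (simp add: field_simps)
    moreover have "x powr (1 + 1 / n) = x * R powr 2 * (4 * b) powr (1 / n)"
      using x b by (simp add: R(3) powr_add powr_divide)
    ultimately have "x powr (1 + 1 / n) \<le> ?cT * T"
      by (metis mult_right_mono powr_ge_zero mult.commute mult.assoc)
    then show ?thesis using x by (simp add: add_increasing2)
  next
    case False
    then have "x < 4 * a * (4 * b) powr (- 3 / (2 * n)) * x powr (3 / (2 * n))"
      using x b by (simp add: R(4) powr_divide powr_minus divide_simps)
    then have "x < (4 * a * (4 * b) powr (- 3 / (2 * n))) powr (1 / (1 - 3 / (2 * n)))"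
      using x n by (intro less_root_of_less_powr) auto
    then have "x powr (1 / n) \<le> ?cx"
      using x n by (intro powr_mono2) auto
    then have "x powr (1 + 1 / n) \<le> ?cx * x"
      using x by (simp add: powr_add mult.commute)
    then show ?thesis using T by (simp add: add_increasing)
  qed
qed

definition scale_interpolation :: "real \<Rightarrow> real \<Rightarrow> real \<Rightarrow> real \<Rightarrow> bool" where
  "scale_interpolation a b n c \<longleftrightarrow> (\<forall>x T. 0 \<le> x \<longrightarrow> 0 \<le> T
      \<longrightarrow> (\<forall>R > 0. x \<le> a * R powr 3 + b * R powr (2 * n) + T / R powr 2)
      \<longrightarrow> x powr (1 + 1 / n) \<le> c * (x + T))"

lemma scale_interpolation_exists:
  fixes a b n :: real
  assumes b: "0 < b" and n: "3/2 < n"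
  obtains c where "0 < c" and "scale_interpolation a b n c"
proof
  define cT where "cT = 2 * (4 * b) powr (1 / n)"
  define cx where "cx = ((4 * a * (4 * b) powr (- 3 / (2 * n))) powr (1 / (1 - 3 / (2 * n)))) powr (1 / n)"
  have coeffs: "0 < cT" "0 \<le> cx" using b by (simp_all add: cT_def cx_def)
  then show "0 < cT + cx" by simp
  show "scale_interpolation a b n (cT + cx)"
    unfolding scale_interpolation_def
  proof (intro allI impI)
    fix x T :: real
    assume x: "0 \<le> x" and T: "0 \<le> T"
      and bound: "\<forall>R > 0. x \<le> a * R powr 3 + b * R powr (2 * n) + T / R powr 2"
    show "x powr (1 + 1 / n) \<le> (cT + cx) * (x + T)"
    proof (cases "x = 0")
      case True
      then show ?thesis using T coeffs by simp
    next
      case False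
      then have "0 < (x / (4 * b)) powr (1 / (2 * n))" using x b by simp
      then have "x powr (1 + 1 / n) \<le> cT * T + cx * x"
        unfolding cT_def cx_def using False x T b n bound
        by (intro powr_le_at_balanced_scale[OF _ T b n refl]) auto
      also have "\<dots> \<le> (cT + cx) * (x + T)"
        using x T coeffs by (simp add: algebra_simps add_increasing add_increasing2)
      finally show ?thesis .
    qed
  qed
qed

lemma sublinear_perturbation_bounded_below:
  fixes C g :: real
  assumes "0 < C" "0 < g" "g < 1"
  obtains D where "\<And>t. 0 \<le> t \<Longrightarrow> - D \<le> t - C * (1 + t) powr g"
proof
  define T0 where "T0 = max 1 ((2 * C) powr (1 / (1 - g)))"
  fix t :: real
  assume t: "0 \<le> t"
  show "- (C * T0 powr g + 1) \<le> t - C * (1 + t) powr g"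
  proof (cases "1 + t \<le> T0")
    case True
    then have "C * (1 + t) powr g \<le> C * T0 powr g"
      using t assms by (intro mult_left_mono powr_mono2) auto
    then show ?thesis using t by linarith
  next
    case False
    then have "((2 * C) powr (1 / (1 - g))) powr (1 - g) \<le> (1 + t) powr (1 - g)"
      using t assms by (intro powr_mono2) (auto simp: T0_def)
    then have "2 * C \<le> (1 + t) powr (1 - g)"
      using assms by (simp add: powr_powr)
    then have "2 * C * (1 + t) powr g \<le> (1 + t) powr (1 - g) * (1 + t) powr g"
      by (simp add: mult_right_mono)
    then have "2 * (C * (1 + t) powr g) \<le> 1 + t"
      using t by (simp add: powr_add[symmetric])
    moreover have "0 \<le> C * T0 powr g" using assms by simp
    ultimately show ?thesis using t by linarith
  qed
qed

lemma nn_integral_lborel_reflect: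
  fixes h :: "'a::euclidean_space \<Rightarrow> ennreal"
  assumes [measurable]: "h \<in> borel_measurable borel"
  shows "(\<integral>\<^sup>+ y. h (x - y) \<partial>lborel) = (\<integral>\<^sup>+ z. h z \<partial>lborel)"
proof -
  have "(\<integral>\<^sup>+ z. h z \<partial>lborel)
      = (\<integral>\<^sup>+ z. h z \<partial>density (distr lborel borel (\<lambda>y. x + (-1) *\<^sub>R y)) (\<lambda>_. \<bar>-1::real\<bar> ^ DIM('a)))"
    by (subst lborel_affine[of "-1" x]) auto
  also have "\<dots> = (\<integral>\<^sup>+ z. h z \<partial>distr lborel borel (\<lambda>y. x + (-1) *\<^sub>R y))"
    by (simp add: density_1)
  also have "\<dots> = (\<integral>\<^sup>+ y. h (x - y) \<partial>lborel)"
    by (subst nn_integral_distr) auto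
  finally show ?thesis ..
qed

lemma emeasure_cball_0:
  fixes t :: real
  assumes "t \<ge> 0"
  shows "emeasure lborel (cball (0::'a::euclidean_space) t) = ennreal (t ^ DIM('a) * measure lborel (ball (0::'a) 1))"
proof -
  have "measure lborel (cball (0::'a) t) = t ^ DIM('a) * measure lborel (ball (0::'a) 1)"
    using content_ball_conv_unit_ball[OF assms, of "0::'a"] by (simp only: content_cball_conv_ball)
  then show ?thesis
    using emeasure_lborel_cball_finite[of "0::'a" t] by (simp add: emeasure_eq_ennreal_measure)
qed

lemma norm_powr_le_dyadic_sum:
  fixes z :: "'a::real_normed_vector" and d r :: real
  assumes "d > 0" "r > 0"
  shows "ennreal (indicator (ball 0 d) z * norm z powr (-r))
     \<le> (\<Sum>j. ennreal ((d / 2 ^ Suc j) powr (-r)) * indicator (cball 0 (d / 2 ^ j)) z)"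
proof (cases "z \<in> ball 0 d \<and> z \<noteq> 0")
  case False then show ?thesis by (auto simp: indicator_def)
next
  case True
  then have z: "norm z > 0" "norm z < d" by auto
  define x where "x = d / norm z"
  have x: "x > 1" using z by (simp add: x_def)
  define j where "j = nat \<lfloor>log 2 x\<rfloor>"
  have j: "real j = \<lfloor>log 2 x\<rfloor>" using x by (simp add: j_def)
  have "real j \<le> log 2 x" "log 2 x < real j + 1"
    using j by linarith+
  then have "2 powr real j \<le> 2 powr log 2 x" "2 powr log 2 x < 2 powr (real j + 1)"
    by (intro powr_mono powr_less_mono; simp)+
  then have "2 ^ j \<le> x" "x < 2 ^ Suc j"
    using x by (simp_all add: powr_realpow[symmetric] powr_add)
  then have in_shell: "norm z \<le> d / 2 ^ j" "d / 2 ^ Suc j < norm z"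
    using z by (simp_all add: x_def field_simps)
  have "norm z powr (-r) \<le> (d / 2 ^ Suc j) powr (-r)"
    using in_shell assms by (intro powr_mono2') auto
  then have "ennreal (indicator (ball 0 d) z * norm z powr (-r))
      \<le> ennreal ((d / 2 ^ Suc j) powr (-r)) * indicator (cball 0 (d / 2 ^ j)) z"
    using True in_shell by (auto simp: indicator_def intro: ennreal_leI)
  also have "\<dots> \<le> (\<Sum>j. ennreal ((d / 2 ^ Suc j) powr (-r)) * indicator (cball 0 (d / 2 ^ j)) z)"
    using sum_le_suminf[OF summableI, of "{j}"] by simp
  finally show ?thesis .
qed

lemma dyadic_shell_term:
  fixes d r N :: real and j :: nat
  assumes "d > 0"
  shows "(d / 2 ^ Suc j) powr (-r) * (d / 2 ^ j) powr N = 2 powr r * d powr (N - r) * (2 powr (r - N)) ^ j"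
proof -
  have scale: "(d / 2 powr e) powr a = d powr a * 2 powr (- (a * e))" for a e :: real
  proof -
    have "(d / 2 powr e) powr a = d powr a / (2 powr e) powr a"
      using assms by (simp add: powr_divide)
    then show ?thesis by (simp add: powr_powr powr_minus divide_inverse mult.commute)
  qed
  have pow2: "(2::real) ^ Suc j = 2 powr (real j + 1)" "(2::real) ^ j = 2 powr real j"
    by (simp_all add: powr_add powr_realpow)
  have "(d / 2 ^ Suc j) powr (-r) * (d / 2 ^ j) powr N
      = (d powr (-r) * d powr N) * (2 powr (r * (real j + 1)) * 2 powr (- (N * real j)))"
    unfolding pow2 scale by (simp add: mult_ac)
  also have "\<dots> = d powr (N - r) * (2 powr r * 2 powr ((r - N) * real j))"
    by (simp add: powr_add[symmetric] algebra_simps)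
  also have "2 powr ((r - N) * real j) = (2 powr (r - N)) ^ j"
    by (simp add: powr_realpow[symmetric] powr_powr)
  finally show ?thesis by (simp add: mult_ac)
qed

lemma nn_integral_ball_norm_powr_le:
  fixes d r :: real
  assumes "d > 0" "0 < r" "r < real DIM('a::euclidean_space)"
  shows "(\<integral>\<^sup>+ z. ennreal (indicator (ball (0::'a) d) z * norm z powr (-r)) \<partial>lborel)
      \<le> ennreal (measure lborel (ball (0::'a) 1) * 2 powr r / (1 - 2 powr (r - real DIM('a)))
          * d powr (real DIM('a) - r))"
proof -
  define c where "c = measure lborel (ball (0::'a) 1)"
  define q where "q = (2::real) powr (r - real DIM('a))"
  have c: "c \<ge> 0" by (simp add: c_def)
  have q: "0 \<le> q" "q < 1" using assms by (simp_all add: q_def powr_less_one)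
  have shell: "(\<integral>\<^sup>+ z. ennreal ((d / 2 ^ Suc j) powr (-r)) * indicator (cball (0::'a) (d / 2 ^ j)) z \<partial>lborel)
      = ennreal (c * 2 powr r * d powr (real DIM('a) - r) * q ^ j)" for j
  proof -
    have "(d / 2 ^ j) ^ DIM('a) = (d / 2 ^ j) powr DIM('a)"
      using assms by (simp add: powr_realpow)
    then have shell_term: "(d / 2 ^ Suc j) powr (-r) * ((d / 2 ^ j) ^ DIM('a) * c)
        = c * 2 powr r * d powr (real DIM('a) - r) * q ^ j"
      using dyadic_shell_term[OF assms(1), where N = "real DIM('a)"] by (simp add: q_def mult_ac)
    have "emeasure lborel (cball (0::'a) (d / 2 ^ j)) = ennreal ((d / 2 ^ j) ^ DIM('a) * c)"
      using assms by (simp add: emeasure_cball_0 c_def)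
    then have "(\<integral>\<^sup>+ z. ennreal ((d / 2 ^ Suc j) powr (-r)) * indicator (cball (0::'a) (d / 2 ^ j)) z \<partial>lborel)
        = ennreal ((d / 2 ^ Suc j) powr (-r)) * ennreal ((d / 2 ^ j) ^ DIM('a) * c)"
      by (simp add: nn_integral_cmult_indicator)
    also have "\<dots> = ennreal ((d / 2 ^ Suc j) powr (-r) * ((d / 2 ^ j) ^ DIM('a) * c))"
      using assms c by (simp add: ennreal_mult)
    finally show ?thesis unfolding shell_term .
  qed
  have "(\<integral>\<^sup>+ z. ennreal (indicator (ball (0::'a) d) z * norm z powr (-r)) \<partial>lborel)
     \<le> (\<integral>\<^sup>+ z. (\<Sum>j. ennreal ((d / 2 ^ Suc j) powr (-r)) * indicator (cball (0::'a) (d / 2 ^ j)) z) \<partial>lborel)"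
    by (rule nn_integral_mono) (rule norm_powr_le_dyadic_sum[OF assms(1,2)])
  also have "\<dots> = (\<Sum>j. \<integral>\<^sup>+ z. ennreal ((d / 2 ^ Suc j) powr (-r)) * indicator (cball (0::'a) (d / 2 ^ j)) z \<partial>lborel)"
    by (intro nn_integral_suminf borel_measurable_times_ennreal borel_measurable_indicator
        borel_measurable_const) (simp add: sets_lborel borel_closed)
  also have "\<dots> = (\<Sum>j. ennreal (c * 2 powr r * d powr (real DIM('a) - r) * q ^ j))"
    by (simp only: shell)
  also have "\<dots> = ennreal (\<Sum>j. c * 2 powr r * d powr (real DIM('a) - r) * q ^ j)"
    using q c by (intro suminf_ennreal2 summable_mult summable_geometric) auto
  also have "(\<Sum>j. c * 2 powr r * d powr (real DIM('a) - r) * q ^ j)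
      = c * 2 powr r * d powr (real DIM('a) - r) * (1 / (1 - q))"
    using q by (simp add: suminf_mult suminf_geometric)
  finally show ?thesis unfolding c_def q_def by (simp add: mult_ac)
qed

definition near_kernel :: "real \<Rightarrow> real \<Rightarrow> 'a::real_normed_vector \<Rightarrow> ennreal" where
  "near_kernel d r z = ennreal (if norm z < d then norm z powr (-r) else 0)"

lemma near_kernel_measurable [measurable]:
  "near_kernel d r \<in> borel_measurable (borel :: 'a::euclidean_space measure)"
  unfolding near_kernel_def by measurable

lemma near_kernel_minus_commute: "near_kernel d r (x - y) = near_kernel d r (y - x)"
  by (simp add: near_kernel_def norm_minus_commute)

lemma coulomb_young_pointwise:
  fixes a b A B :: ennreal and z :: "'a::real_normed_vector" and d lam mu s t p r :: real
  assumes ab: "enn_powr_le p a A" "enn_powr_le p b B" and d_pos: "0 < d" and r: "0 < r"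
    and prm: "0 < lam" "0 < mu" "lam powr (2 * s) * mu powr t = 1" "r * (2 * s) = 1" "p * (s + t) = 1"
      "0 < s" "0 < t" "2 * s + t = 1"
  shows "a * b * ennreal (1 / norm z)
    \<le> ennreal (s * lam) * (A * near_kernel d r z) + ennreal (s * lam) * (B * near_kernel d r z)
      + ennreal (t * mu) * (A * B) + ennreal (1 / d) * (a * b)"
proof -
  define near where "near = (if norm z < d then 1 / norm z else 0)"
  have near_nonneg: "0 \<le> near" by (simp add: near_def)
  have "near powr r = (if norm z < d then norm z powr (-r) else 0)"
    using r by (cases "z = 0") (simp_all add: near_def powr_minus_divide powr_divide)
  then have near_kernel: "ennreal (s * lam * near powr r) = ennreal (s * lam) * near_kernel d r z"
    using prm by (simp add: near_kernel_def ennreal_mult')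
  have "1 / norm z \<le> near + 1 / d"
    using d_pos by (cases "norm z < d") (auto simp: near_def frac_le)
  then have "ennreal (1 / norm z) \<le> ennreal near + ennreal (1 / d)"
    using near_nonneg d_pos by (simp add: ennreal_leI flip: ennreal_plus)
  then have "a * b * ennreal (1 / norm z) \<le> a * b * (ennreal near + ennreal (1 / d))"
    by (rule mult_left_mono) simp
  also have "\<dots> = a * b * ennreal near + ennreal (1 / d) * (a * b)"
    by (simp add: distrib_left mult.commute)
  also have "a * b * ennreal near
      \<le> ennreal (s * lam * near powr r) * A + ennreal (s * lam * near powr r) * B + ennreal (t * mu) * A * B"
    by (rule three_term_young_ennreal[OF ab near_nonneg prm])
  finally show ?thesis unfolding near_kernel by (simp add: mult_ac)
qed

lemma coulomb_double_integral_le: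
  fixes rh G :: "'a::euclidean_space \<Rightarrow> ennreal" and d lam mu s t p r :: real
  assumes [measurable]: "rh \<in> borel_measurable lborel" "G \<in> borel_measurable lborel"
    and dom: "\<And>x. enn_powr_le p (rh x) (G x)" and d: "0 < d" and r: "0 < r"
    and prm: "0 < lam" "0 < mu" "lam powr (2 * s) * mu powr t = 1" "r * (2 * s) = 1" "p * (s + t) = 1"
      "0 < s" "0 < t" "2 * s + t = 1"
  shows "(\<integral>\<^sup>+ x. \<integral>\<^sup>+ y. rh x * rh y * ennreal (1 / norm (x - y)) \<partial>lborel \<partial>lborel)
    \<le> 2 * ennreal (s * lam) * ((\<integral>\<^sup>+ x. G x \<partial>lborel) * (\<integral>\<^sup>+ z. near_kernel d r (z::'a) \<partial>lborel))
      + ennreal (t * mu) * (\<integral>\<^sup>+ x. G x \<partial>lborel) ^ 2 + ennreal (1 / d) * (\<integral>\<^sup>+ x. rh x \<partial>lborel) ^ 2"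
proof -
  let ?K = "\<integral>\<^sup>+ z. near_kernel d r (z::'a) \<partial>lborel"
  let ?G = "\<integral>\<^sup>+ x. G x \<partial>lborel"
  let ?R = "\<integral>\<^sup>+ x. rh x \<partial>lborel"
  have convolution: "(\<integral>\<^sup>+ x. \<integral>\<^sup>+ y. G y * near_kernel d r (x - y) \<partial>lborel \<partial>lborel) = ?G * ?K"
  proof -
    have "(\<integral>\<^sup>+ x. \<integral>\<^sup>+ y. G y * near_kernel d r (x - y) \<partial>lborel \<partial>lborel)
        = (\<integral>\<^sup>+ y. \<integral>\<^sup>+ x. G y * near_kernel d r (y - x) \<partial>lborel \<partial>lborel)"
      by (subst lborel_pair.Fubini') (simp_all add: near_kernel_minus_commute)
    also have "\<dots> = (\<integral>\<^sup>+ y. G y * ?K \<partial>lborel)"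
      by (simp add: nn_integral_cmult nn_integral_lborel_reflect)
    finally show ?thesis by (simp add: nn_integral_multc)
  qed
  have "(\<integral>\<^sup>+ x. \<integral>\<^sup>+ y. rh x * rh y * ennreal (1 / norm (x - y)) \<partial>lborel \<partial>lborel)
     \<le> (\<integral>\<^sup>+ x. \<integral>\<^sup>+ y. ennreal (s * lam) * (G x * near_kernel d r (x - y))
        + ennreal (s * lam) * (G y * near_kernel d r (x - y))
        + ennreal (t * mu) * (G x * G y) + ennreal (1 / d) * (rh x * rh y) \<partial>lborel \<partial>lborel)"
    by (intro nn_integral_mono coulomb_young_pointwise[OF dom dom d r prm])
  also have "\<dots> = (\<integral>\<^sup>+ x. ennreal (s * lam) * (G x * ?K)
        + ennreal (s * lam) * (\<integral>\<^sup>+ y. G y * near_kernel d r (x - y) \<partial>lborel)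
        + ennreal (t * mu) * (G x * ?G) + ennreal (1 / d) * (rh x * ?R) \<partial>lborel)"
    by (simp add: nn_integral_add nn_integral_cmult nn_integral_lborel_reflect)
  also have "\<dots> = ennreal (s * lam) * (?G * ?K) + ennreal (s * lam) * (?G * ?K)
        + ennreal (t * mu) * (?G * ?G) + ennreal (1 / d) * (?R * ?R)"
    by (simp add: nn_integral_add nn_integral_cmult nn_integral_multc convolution)
  finally show ?thesis by (simp add: power2_eq_square mult_2 distrib_right mult.assoc)
qed

lemma nn_integral_near_kernel_le:
  fixes r :: real
  assumes "0 < r" "r < real DIM('a::euclidean_space)"
  obtains K where "0 \<le> K"
    and "\<And>d. 0 < d \<Longrightarrow> (\<integral>\<^sup>+ z. near_kernel d r (z::'a) \<partial>lborel) \<le> ennreal (K * d powr (real DIM('a) - r))"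
proof
  have "2 powr (r - real DIM('a)) < 1"
    using assms by (intro powr_less_one) auto
  then show "0 \<le> measure lborel (ball (0::'a) 1) * 2 powr r / (1 - 2 powr (r - real DIM('a)))"
    by (intro divide_nonneg_pos mult_nonneg_nonneg) auto
  fix d :: real
  assume "0 < d"
  have "near_kernel d r = (\<lambda>z::'a. ennreal (indicator (ball 0 d) z * norm z powr (-r)))"
    by (simp add: fun_eq_iff near_kernel_def indicator_def)
  then show "(\<integral>\<^sup>+ z. near_kernel d r (z::'a) \<partial>lborel)
      \<le> ennreal (measure lborel (ball (0::'a) 1) * 2 powr r / (1 - 2 powr (r - real DIM('a)))
          * d powr (real DIM('a) - r))"
    using nn_integral_ball_norm_powr_le[OF \<open>0 < d\<close> assms] by (simp only:)
qed

text \<open>The weights \<open>\<lambda> = X\<^sup>(\<^sup>2\<^sup>-\<^sup>g\<^sup>)\<^sup>(\<^sup>n\<^sup>-\<^sup>1\<^sup>)\<^sup>/\<^sup>2\<close>, \<open>\<mu> = X\<^sup>g\<^sup>-\<^sup>2\<close> and the cut-off radius \<open>d = X\<^sup>-\<^sup>g\<close>, with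
  \<open>g = n/N\<close>, make all three terms of the double-integral bound scale like \<open>X\<^sup>g\<close>.\<close>

lemma coulomb_weight_exponents:
  fixes n N X :: real
  assumes n: "1 < n" and N: "0 < N" and X: "0 < X"
  defines "g \<equiv> n / N"
  shows "(X powr ((2 - g) * (n - 1) / 2)) powr (2 / (n + 1)) * (X powr (g - 2)) powr ((n - 1) / (n + 1)) = 1"
    and "X powr ((2 - g) * (n - 1) / 2) * X * (X powr (- g)) powr (N - (n + 1) / 2) = X powr g"
    and "X powr (g - 2) * X\<^sup>2 = X powr g"
    and "1 / X powr (- g) = X powr g"
proof -
  have "(2 - g) * (n - 1) / 2 * (2 / (n + 1)) + (g - 2) * ((n - 1) / (n + 1)) = 0"
    using n by (simp add: field_simps)
  then show "(X powr ((2 - g) * (n - 1) / 2)) powr (2 / (n + 1)) * (X powr (g - 2)) powr ((n - 1) / (n + 1)) = 1"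
    using X by (simp add: powr_powr flip: powr_add)
  have "(2 - g) * (n - 1) / 2 + 1 + - g * (N - (n + 1) / 2) = n + g - g * N"
    by (simp add: field_simps; simp add: algebra_simps)
  also have "\<dots> = g" using N by (simp add: g_def)
  finally have exponent: "(2 - g) * (n - 1) / 2 + 1 + - g * (N - (n + 1) / 2) = g" .
  have "X powr ((2 - g) * (n - 1) / 2) * X * (X powr (- g)) powr (N - (n + 1) / 2)
      = X powr ((2 - g) * (n - 1) / 2) * X powr 1 * X powr (- g * (N - (n + 1) / 2))"
    using X by (simp add: powr_powr)
  also have "\<dots> = X powr g"
    by (simp only: powr_add[symmetric] exponent)
  finally show "X powr ((2 - g) * (n - 1) / 2) * X * (X powr (- g)) powr (N - (n + 1) / 2) = X powr g" .
  show "X powr (g - 2) * X\<^sup>2 = X powr g"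
    using X by (simp add: powr_add[symmetric] flip: powr_numeral)
  show "1 / X powr (- g) = X powr g"
    by (simp add: powr_minus divide_inverse)
qed

lemma coulomb_energy_le_powr:
  fixes rh G :: "'a::euclidean_space \<Rightarrow> ennreal" and n K W M X :: real
  assumes [measurable]: "rh \<in> borel_measurable lborel" "G \<in> borel_measurable lborel"
    and dom: "\<And>x. enn_powr_le (1 + 1 / n) (rh x) (G x)"
    and n: "1 < n" "n < 2 * real DIM('a) - 1"
    and K: "0 \<le> K" "\<And>d. 0 < d
      \<Longrightarrow> (\<integral>\<^sup>+ z. near_kernel d ((n + 1) / 2) (z::'a) \<partial>lborel) \<le> ennreal (K * d powr (real DIM('a) - (n + 1) / 2))"
    and G: "(\<integral>\<^sup>+ x. G x \<partial>lborel) \<le> ennreal (W * X)" "0 \<le> W" "0 < X"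
    and rh: "(\<integral>\<^sup>+ x. rh x \<partial>lborel) = ennreal M" "0 \<le> M"
  shows "(\<integral>\<^sup>+ x. \<integral>\<^sup>+ y. rh x * rh y * ennreal (1 / norm (x - y)) \<partial>lborel \<partial>lborel)
    \<le> ennreal ((2 * K * W / (n + 1) + (n - 1) / (n + 1) * W\<^sup>2 + M\<^sup>2) * X powr (n / DIM('a)))"
proof -
  define N where "N = real DIM('a)"
  define s where "s = 1 / (n + 1)"
  define t where "t = (n - 1) / (n + 1)"
  define r where "r = (n + 1) / 2"
  define g where "g = n / N"
  define lam where "lam = X powr ((2 - g) * (n - 1) / 2)"
  define mu where "mu = X powr (g - 2)"
  define d where "d = X powr (- g)"
  have N: "0 < N" by (simp add: N_def)
  note exponents = coulomb_weight_exponents[OF n(1) N G(3), folded g_def, folded lam_def mu_def d_def r_def]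
  have pos: "0 < s" "0 < t" "0 < r" "0 < lam" "0 < mu" "0 < d"
    using n G(3) by (simp_all add: s_def t_def r_def lam_def mu_def d_def)
  have "0 < n * n" using n by simp
  then have "n + n * n \<noteq> 0" "1 + (n * n + n * 2) \<noteq> 0" using n by linarith+
  then have weights: "lam powr (2 * s) * mu powr t = 1" "r * (2 * s) = 1" "(1 + 1 / n) * (s + t) = 1"
    "2 * s + t = 1"
    using n exponents(1) by (simp_all add: s_def t_def r_def field_simps)
  have "(\<integral>\<^sup>+ x. \<integral>\<^sup>+ y. rh x * rh y * ennreal (1 / norm (x - y)) \<partial>lborel \<partial>lborel)
    \<le> 2 * ennreal (s * lam) * ((\<integral>\<^sup>+ x. G x \<partial>lborel) * (\<integral>\<^sup>+ z. near_kernel d r (z::'a) \<partial>lborel))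
      + ennreal (t * mu) * (\<integral>\<^sup>+ x. G x \<partial>lborel) ^ 2 + ennreal (1 / d) * (\<integral>\<^sup>+ x. rh x \<partial>lborel) ^ 2"
    using pos weights by (intro coulomb_double_integral_le[where p = "1 + 1 / n"] dom) auto
  also have "\<dots> \<le> 2 * ennreal (s * lam) * (ennreal (W * X) * ennreal (K * d powr (N - r)))
      + ennreal (t * mu) * ennreal (W * X) ^ 2 + ennreal (1 / d) * ennreal M ^ 2"
    unfolding rh(1) r_def N_def
    by (intro add_mono mult_left_mono mult_mono power_mono G(1) K(2) pos) auto
  also have "\<dots> = ennreal (2 * s * K * W * (lam * X * d powr (N - r))) + ennreal (t * W\<^sup>2 * (mu * X\<^sup>2))
      + ennreal (M\<^sup>2 * (1 / d))"
  proof -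
    have "2 * ennreal (s * lam) * (ennreal (W * X) * ennreal (K * d powr (N - r)))
        = ennreal (2 * s * K * W * (lam * X * d powr (N - r)))"
      using pos G K by (simp add: ennreal_mult mult_ac)
    moreover have "ennreal (t * mu) * ennreal (W * X) ^ 2 = ennreal (t * W\<^sup>2 * (mu * X\<^sup>2))"
      using pos G by (simp add: ennreal_mult ennreal_power[symmetric] power_mult_distrib mult_ac)
    moreover have "ennreal (1 / d) * ennreal M ^ 2 = ennreal (M\<^sup>2 * (1 / d))"
      using pos rh(2) by (simp add: ennreal_power ennreal_mult'[symmetric])
    ultimately show ?thesis by simp
  qed
  also have "\<dots> = ennreal ((2 * s * K * W + t * W\<^sup>2 + M\<^sup>2) * X powr g)"
    using pos G K unfolding exponents(2-4) by (simp add: algebra_simps flip: ennreal_plus)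
  finally show ?thesis by (simp add: s_def t_def g_def N_def mult_ac)
qed

lemma nn_integral_lborel_pair:
  fixes g :: "'a::euclidean_space \<Rightarrow> 'b::euclidean_space \<Rightarrow> ennreal"
  assumes [measurable]: "(\<lambda>(x, v). g x v) \<in> borel_measurable (lborel \<Otimes>\<^sub>M lborel)"
  shows "(\<integral>\<^sup>+ x. \<integral>\<^sup>+ v. g x v \<partial>lborel \<partial>lborel) = (\<integral>\<^sup>+ z. g (fst z) (snd z) \<partial>lborel)"
proof -
  have "(\<integral>\<^sup>+ x. \<integral>\<^sup>+ v. g x v \<partial>lborel \<partial>lborel) = integral\<^sup>N (lborel \<Otimes>\<^sub>M lborel) (\<lambda>(x, v). g x v)"
    using lborel.nn_integral_fst[of "\<lambda>(x, v). g x v" "lborel :: 'a measure"] by simp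
  also have "\<dots> = (\<integral>\<^sup>+ z. g (fst z) (snd z) \<partial>lborel)"
    by (simp add: lborel_prod case_prod_beta')
  finally show ?thesis .
qed

lemma velocity_split:
  fixes Q :: "real \<Rightarrow> real" and C1 F0 k y R :: real and v :: "'a::real_normed_vector"
  assumes C1: "0 < C1" and F0: "0 \<le> F0" and k: "0 < k" and Q: "0 \<le> Q y" "F0 \<le> y \<Longrightarrow> C1 * y powr (1 + 1 / k) \<le> Q y"
    and y: "0 \<le> y" and R: "0 < R"
  shows "y \<le> indicator (cball 0 R) v * (F0 + R powr (2 * k)) + R powr (-2) * (1 / C1 * Q y + (norm v)\<^sup>2 * y)"
proof -
  have Q_term: "0 \<le> R powr (-2) * (1 / C1 * Q y)" using Q(1) C1 by simp
  have v_term: "0 \<le> R powr (-2) * ((norm v)\<^sup>2 * y)" using y by simp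
  show ?thesis
  proof (cases "norm v \<le> R")
    case False
    then have "R powr 2 \<le> (norm v)\<^sup>2" using R by (simp add: powr_realpow power_mono)
    then have "y * R powr 2 \<le> (norm v)\<^sup>2 * y" using y by (simp add: mult.commute mult_left_mono)
    then have "y \<le> R powr (-2) * ((norm v)\<^sup>2 * y)"
      using R by (simp add: powr_minus field_simps)
    then show ?thesis using False Q_term by (simp add: distrib_left)
  next
    case True
    show ?thesis
    proof (cases "y \<le> F0 + R powr (2 * k)")
      case True
      then show ?thesis using \<open>norm v \<le> R\<close> Q_term v_term by (simp add: distrib_left)
    next
      case False
      then have large: "F0 \<le> y" "R powr (2 * k) < y"
        using F0 powr_ge_zero[of R "2 * k"] by linarith+
      have "1 \<le> y / R powr (2 * k)" using large(2) R by simp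
      then have "1 \<le> (y / R powr (2 * k)) powr (1 / k)"
        using k by (intro ge_one_powr_ge_zero) auto
      then have "y \<le> y * (y / R powr (2 * k)) powr (1 / k)"
        using y by (metis mult_left_mono mult.right_neutral)
      also have "\<dots> = R powr (-2) * (y * y powr (1 / k))"
        using y R k by (simp add: powr_divide powr_powr powr_minus divide_simps)
      also have "\<dots> = R powr (-2) * y powr (1 + 1 / k)"
        using y by (simp add: powr_add)
      also have "\<dots> \<le> R powr (-2) * (1 / C1 * Q y)"
        using Q(2)[OF large(1)] C1 by (intro mult_left_mono) (auto simp: field_simps)
      finally have "y \<le> R powr (-2) * (1 / C1 * Q y)" .
      moreover have "indicator (cball 0 R) v = (1::real)" using \<open>norm v \<le> R\<close> by simp
      ultimately show ?thesis
        using v_term F0 powr_ge_zero[of R "2 * k"] by (simp only: mult_1 distrib_left)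
    qed
  qed
qed

locale phase_space_density =
  fixes Q :: "real \<Rightarrow> real" and C1 F0 k :: real and f :: pdens
  assumes C1_pos: "0 < C1" and F0_pos: "0 < F0" and k_pos: "0 < k"
    and Q_nonneg: "\<And>s. 0 \<le> s \<Longrightarrow> 0 \<le> Q s"
    and Q_growth: "\<And>s. F0 \<le> s \<Longrightarrow> C1 * s powr (1 + 1 / k) \<le> Q s"
    and Q_cont: "continuous_on {0..} Q"
    and f_nonneg: "\<And>x v. 0 \<le> f x v"
    and f_measurable: "(\<lambda>z. f (fst z) (snd z)) \<in> borel_measurable (lborel :: ((real^3) \<times> (real^3)) measure)"
begin

lemma f_measurable_split [measurable]: "(\<lambda>(x, v). f x v) \<in> borel_measurable (lborel \<Otimes>\<^sub>M lborel)"
  using f_measurable by (simp add: lborel_prod case_prod_beta')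

lemma Q_f_measurable_split [measurable]:
  "(\<lambda>(x, v). Q (f x v)) \<in> borel_measurable (lborel \<Otimes>\<^sub>M lborel)"
proof -
  have "continuous_on UNIV (\<lambda>s. Q (max 0 s))"
    by (rule continuous_on_compose2[OF Q_cont]) (auto intro!: continuous_intros)
  then have [measurable]: "(\<lambda>s. Q (max 0 s)) \<in> borel_measurable borel"
    by (rule borel_measurable_continuous_onI)
  have "(\<lambda>(x, v). Q (max 0 (f x v))) \<in> borel_measurable (lborel \<Otimes>\<^sub>M lborel)"
    by measurable
  moreover have "(\<lambda>(x, v). Q (max 0 (f x v))) = (\<lambda>(x, v). Q (f x v))"
    using f_nonneg by (simp add: max_absorb2)
  ultimately show ?thesis by simp
qed

definition energy_density :: "real^3 \<Rightarrow> ennreal" where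
  "energy_density x = ennreal (1 / C1) * (\<integral>\<^sup>+ v. ennreal (Q (f x v)) \<partial>lborel)
    + (\<integral>\<^sup>+ v. ennreal ((norm v)\<^sup>2 * f x v) \<partial>lborel)"

lemma rho_measurable [measurable]: "rho f \<in> borel_measurable lborel"
  unfolding rho_def[abs_def] by measurable

lemma energy_density_measurable [measurable]: "energy_density \<in> borel_measurable lborel"
  unfolding energy_density_def[abs_def] by measurable

lemma rho_le_scales:
  assumes R: "0 < R"
  shows "rho f x \<le> ennreal ((F0 + R powr (2 * k)) * (R ^ 3 * measure lborel (ball (0::real^3) 1)))
    + ennreal (R powr (-2)) * energy_density x"
proof -
  define h where "h = F0 + R powr (2 * k)"
  have h: "0 \<le> h" using F0_pos by (simp add: h_def)
  have pointwise: "ennreal (f x v) \<le> ennreal h * indicator (cball 0 R) v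
      + ennreal (R powr (-2)) * (ennreal (1 / C1) * ennreal (Q (f x v)) + ennreal ((norm v)\<^sup>2 * f x v))"
    for v :: "real^3"
  proof -
    have "f x v \<le> indicator (cball 0 R) v * h + R powr (-2) * (1 / C1 * Q (f x v) + (norm v)\<^sup>2 * f x v)"
      unfolding h_def using C1_pos F0_pos k_pos Q_nonneg Q_growth f_nonneg R
      by (intro velocity_split) auto
    moreover have "ennreal (indicator (cball 0 R) v * h + R powr (-2) * (1 / C1 * Q (f x v) + (norm v)\<^sup>2 * f x v))
        = ennreal h * indicator (cball 0 R) v
          + ennreal (R powr (-2)) * (ennreal (1 / C1) * ennreal (Q (f x v)) + ennreal ((norm v)\<^sup>2 * f x v))"
    proof -
      have "ennreal (1 / C1) * ennreal (Q (f x v)) = ennreal (Q (f x v) / C1)"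
        using C1_pos Q_nonneg[OF f_nonneg] by (simp add: ennreal_mult[symmetric])
      then show ?thesis
        using h C1_pos Q_nonneg[OF f_nonneg] f_nonneg[of x v]
        by (simp add: ennreal_plus ennreal_mult split: split_indicator)
    qed
    ultimately show ?thesis by (metis ennreal_leI)
  qed
  have "rho f x \<le> (\<integral>\<^sup>+ v. ennreal h * indicator (cball 0 R) v
      + ennreal (R powr (-2)) * (ennreal (1 / C1) * ennreal (Q (f x v)) + ennreal ((norm v)\<^sup>2 * f x v)) \<partial>lborel)"
    unfolding rho_def by (intro nn_integral_mono pointwise)
  also have "\<dots> = ennreal h * emeasure lborel (cball (0::real^3) R) + ennreal (R powr (-2)) * energy_density x"
  proof -
    have "(\<lambda>v. ennreal h * indicator (cball (0::real^3) R) v) \<in> borel_measurable lborel"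
      by (intro borel_measurable_times_ennreal borel_measurable_indicator borel_measurable_const)
        (simp add: sets_lborel borel_closed)
    then show ?thesis
      by (simp add: nn_integral_add nn_integral_cmult nn_integral_cmult_indicator energy_density_def)
  qed
  also have "ennreal h * emeasure lborel (cball (0::real^3) R)
      = ennreal (h * (R ^ 3 * measure lborel (ball (0::real^3) 1)))"
    using R h by (simp add: emeasure_cball_0 ennreal_mult)
  finally show ?thesis unfolding h_def .
qed

lemma rho_powr_le:
  assumes c: "0 < c" "scale_interpolation (F0 * measure lborel (ball (0::real^3) 1))
    (measure lborel (ball (0::real^3) 1)) (k + 3/2) c"
  shows "enn_powr_le (1 + 1 / (k + 3/2)) (rho f x) (ennreal c * (rho f x + energy_density x))"
proof (cases "energy_density x = \<infinity>")
  case True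
  then show ?thesis using c by (simp add: enn_powr_le_def ennreal_mult_top)
next
  case False
  define vol where "vol = measure lborel (ball (0::real^3) 1)"
  have "rho f x \<noteq> \<infinity>"
    using rho_le_scales[of 1 x] False by (auto simp: top_unique ennreal_mult_eq_top_iff)
  then obtain rh e where rh: "rho f x = ennreal rh" "0 \<le> rh" and e: "energy_density x = ennreal e" "0 \<le> e"
    using False by (metis ennreal_cases infinity_ennreal_def)
  have "rh \<le> F0 * vol * R powr 3 + vol * R powr (2 * (k + 3/2)) + e / R powr 2" if R: "0 < R" for R
  proof -
    have nonneg: "0 \<le> (F0 + R powr (2 * k)) * (R ^ 3 * vol)" "0 \<le> R powr (-2) * e"
      using R F0_pos e by (simp_all add: vol_def)
    have "ennreal rh \<le> ennreal ((F0 + R powr (2 * k)) * (R ^ 3 * vol)) + ennreal (R powr (-2)) * ennreal e"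
      using rho_le_scales[OF R, of x] rh e by (simp add: vol_def)
    also have "\<dots> = ennreal ((F0 + R powr (2 * k)) * (R ^ 3 * vol) + R powr (-2) * e)"
      using nonneg R e(2) by (simp add: ennreal_mult ennreal_plus)
    finally have "rh \<le> (F0 + R powr (2 * k)) * (R ^ 3 * vol) + R powr (-2) * e"
      using nonneg by (subst (asm) ennreal_le_iff) auto
    also have "\<dots> = F0 * vol * R powr 3 + vol * R powr (2 * (k + 3/2)) + e / R powr 2"
    proof -
      have "R ^ 3 = R powr 3" using R by (simp add: powr_numeral)
      moreover have "R powr (2 * (k + 3/2)) = R powr (2 * k) * R powr 3"
        by (simp add: powr_add[symmetric] algebra_simps)
      moreover have "R powr (-2) * e = e / R powr 2"
        by (simp add: powr_minus divide_inverse)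
      ultimately show ?thesis by (simp add: algebra_simps)
    qed
    finally show ?thesis .
  qed
  then have "rh powr (1 + 1 / (k + 3/2)) \<le> c * (rh + e)"
    using c(2) rh(2) e(2) unfolding scale_interpolation_def vol_def by blast
  then have "ennreal (rh powr (1 + 1 / (k + 3/2))) \<le> ennreal (c * (rh + e))"
    by (rule ennreal_leI)
  also have "\<dots> = ennreal c * (rho f x + energy_density x)"
    using rh e c by (simp add: ennreal_mult)
  finally show ?thesis using rh by (simp add: enn_powr_le_def)
qed

lemma nn_integral_rho: "(\<integral>\<^sup>+ x. rho f x \<partial>lborel) = (\<integral>\<^sup>+ z. ennreal (f (fst z) (snd z)) \<partial>lborel)"
  unfolding rho_def by (rule nn_integral_lborel_pair) measurable

lemma nn_integral_energy_density:
  "(\<integral>\<^sup>+ x. energy_density x \<partial>lborel) = ennreal (1 / C1) * Cas Q f + 2 * Ekin f"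
proof -
  have kinetic: "ennreal ((norm v)\<^sup>2 * f x v) = 2 * ennreal (1 / 2 * (norm v)\<^sup>2 * f x v)" for x v
  proof -
    have "ennreal ((norm v)\<^sup>2 * f x v) = ennreal (2 * (1 / 2 * (norm v)\<^sup>2 * f x v))" by simp
    also have "\<dots> = ennreal 2 * ennreal (1 / 2 * (norm v)\<^sup>2 * f x v)"
      using f_nonneg[of x v] by (intro ennreal_mult) auto
    finally show ?thesis by simp
  qed
  have "(\<integral>\<^sup>+ x. energy_density x \<partial>lborel)
      = ennreal (1 / C1) * (\<integral>\<^sup>+ x. \<integral>\<^sup>+ v. ennreal (Q (f x v)) \<partial>lborel \<partial>lborel)
        + 2 * (\<integral>\<^sup>+ x. \<integral>\<^sup>+ v. ennreal (1 / 2 * (norm v)\<^sup>2 * f x v) \<partial>lborel \<partial>lborel)"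
    unfolding energy_density_def kinetic by (simp add: nn_integral_add nn_integral_cmult)
  also have "(\<integral>\<^sup>+ x. \<integral>\<^sup>+ v. ennreal (Q (f x v)) \<partial>lborel \<partial>lborel) = Cas Q f"
    unfolding Cas_def by (rule nn_integral_lborel_pair) measurable
  also have "(\<integral>\<^sup>+ x. \<integral>\<^sup>+ v. ennreal (1 / 2 * (norm v)\<^sup>2 * f x v) \<partial>lborel \<partial>lborel) = Ekin f"
    unfolding Ekin_def by (rule nn_integral_lborel_pair) measurable
  finally show ?thesis .
qed

lemma nn_integral_rho_energy_le:
  assumes f: "integrable lborel (\<lambda>z::(real^3) \<times> (real^3). f (fst z) (snd z))"
      "(\<integral> z. f (fst z) (snd z) \<partial>(lborel :: ((real^3) \<times> (real^3)) measure)) = M" "Pfun Q f < \<infinity>"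
    and c: "0 \<le> c"
  shows "(\<integral>\<^sup>+ x. ennreal c * (rho f x + energy_density x) \<partial>lborel)
    \<le> ennreal (c * (M + 1 / C1 + 2) * (1 + enn2real (Pfun Q f)))"
proof -
  define P where "P = enn2real (Pfun Q f)"
  have P: "Pfun Q f = ennreal P" "0 \<le> P" using f(3) by (auto simp: P_def less_top)
  have "0 \<le> M" unfolding f(2)[symmetric] by (rule Bochner_Integration.integral_nonneg) (simp add: f_nonneg)
  then have M: "0 \<le> M" "(\<integral>\<^sup>+ x. rho f x \<partial>lborel) = ennreal M"
    using f f_nonneg by (simp_all add: nn_integral_rho nn_integral_eq_integral)
  have "Cas Q f \<le> Pfun Q f" "Ekin f \<le> Pfun Q f"
    by (simp_all add: Pfun_def)
  then have "Cas Q f \<le> ennreal P" "Ekin f \<le> ennreal P"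
    unfolding P(1) .
  then have "(\<integral>\<^sup>+ x. ennreal c * (rho f x + energy_density x) \<partial>lborel)
      \<le> ennreal c * (ennreal M + (ennreal (1 / C1) * ennreal P + 2 * ennreal P))"
    by (simp add: nn_integral_cmult nn_integral_add M nn_integral_energy_density add_mono mult_left_mono)
  also have "\<dots> = ennreal (c * (M + (1 / C1 + 2) * P))"
  proof -
    have "ennreal (1 / C1) * ennreal P = ennreal (P / C1)"
      using C1_pos P(2) by (simp add: ennreal_mult[symmetric])
    then show ?thesis using c M(1) P(2) C1_pos by (simp add: ennreal_mult distrib_right)
  qed
  also have "\<dots> \<le> ennreal (c * (M + 1 / C1 + 2) * (1 + P))"
  proof -
    have "(M + 1 / C1 + 2) * (1 + P) = M + (1 / C1 + 2) * P + (M * P + 1 / C1 + 2)"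
      by (simp add: algebra_simps add_divide_distrib)
    moreover have "0 \<le> M * P" "0 \<le> 1 / C1" using M(1) P(2) C1_pos by simp_all
    ultimately have "M + (1 / C1 + 2) * P \<le> (M + 1 / C1 + 2) * (1 + P)" by linarith
    then show ?thesis using c by (intro ennreal_leI) (simp add: mult_left_mono mult.assoc)
  qed
  finally show ?thesis by (simp add: P_def)
qed

end

lemma Epot_abs_le_powr:
  fixes Q :: "real \<Rightarrow> real" and C1 F0 k M :: real
  assumes C1: "0 < C1" and F0: "0 < F0" and k: "0 < k" "k < 3/2" and M: "0 < M"
    and Q_nonneg: "\<And>s. 0 \<le> s \<Longrightarrow> 0 \<le> Q s"
    and Q_growth: "\<And>s. F0 \<le> s \<Longrightarrow> C1 * s powr (1 + 1 / k) \<le> Q s"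
    and Q_cont: "continuous_on {0..} Q"
  obtains C where "0 < C"
    and "\<And>f. f \<in> FM Q M \<Longrightarrow> Epot_abs f \<le> ennreal (C * (1 + enn2real (Pfun Q f)) powr ((k + 3/2) / 3))"
proof -
  define n where "n = k + 3/2"
  define vol where "vol = measure lborel (ball (0::real^3) 1)"
  have n: "3/2 < n" "n < 3" using k by (simp_all add: n_def)
  have vol: "0 < vol" unfolding vol_def by (rule content_ball_pos) simp
  obtain c where c: "0 < c" "scale_interpolation (F0 * vol) vol n c"
    using scale_interpolation_exists[where a = "F0 * vol" and b = vol and n = n] vol n by auto
  obtain K where K: "0 \<le> K" "\<And>d. 0 < d \<Longrightarrow> (\<integral>\<^sup>+ z. near_kernel d ((n + 1) / 2) (z::real^3) \<partial>lborel)
      \<le> ennreal (K * d powr (real DIM(real^3) - (n + 1) / 2))"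
    using nn_integral_near_kernel_le[of "(n + 1) / 2", where 'a = "real^3"] n by auto
  define W where "W = c * (M + 1 / C1 + 2)"
  define C where "C = (2 * K * W / (n + 1) + (n - 1) / (n + 1) * W\<^sup>2 + M\<^sup>2) / 2"
  have W: "0 \<le> W" using c C1 M by (simp add: W_def)
  have "0 < C" using K(1) W M n by (simp add: C_def add_nonneg_pos)
  moreover have "Epot_abs f \<le> ennreal (C * (1 + enn2real (Pfun Q f)) powr (n / 3))" if f: "f \<in> FM Q M" for f
  proof -
    have f_nonneg: "\<And>x v. 0 \<le> f x v"
      and f_int: "integrable lborel (\<lambda>z::(real^3) \<times> (real^3). f (fst z) (snd z))"
      and f_mass: "(\<integral> z. f (fst z) (snd z) \<partial>(lborel :: ((real^3) \<times> (real^3)) measure)) = M"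
      and f_fin: "Pfun Q f < \<infinity>"
      using f by (auto simp: FM_def)
    interpret phase_space_density Q C1 F0 k f
      using C1 F0 k Q_nonneg Q_growth Q_cont f_nonneg borel_measurable_integrable[OF f_int]
      by unfold_locales auto
    have dom: "enn_powr_le (1 + 1 / n) (rho f x) (ennreal c * (rho f x + energy_density x))" for x
      using rho_powr_le c by (simp add: n_def vol_def)
    have G: "(\<lambda>x. ennreal c * (rho f x + energy_density x)) \<in> borel_measurable lborel"
      by measurable
    have IG: "(\<integral>\<^sup>+ x. ennreal c * (rho f x + energy_density x) \<partial>lborel) \<le> ennreal (W * (1 + enn2real (Pfun Q f)))"
      using nn_integral_rho_energy_le[OF f_int f_mass f_fin] c by (simp add: W_def mult.assoc)
    have IR: "(\<integral>\<^sup>+ x. rho f x \<partial>lborel) = ennreal M"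
      using f_int f_mass f_nonneg by (simp add: nn_integral_rho nn_integral_eq_integral)
    have "(\<integral>\<^sup>+ x. \<integral>\<^sup>+ y. rho f x * rho f y * ennreal (1 / norm (x - y)) \<partial>lborel \<partial>lborel)
        \<le> ennreal ((2 * K * W / (n + 1) + (n - 1) / (n + 1) * W\<^sup>2 + M\<^sup>2)
          * (1 + enn2real (Pfun Q f)) powr (n / DIM(real^3)))"
      by (rule coulomb_energy_le_powr[OF rho_measurable G dom _ _ K IG W _ IR])
        (use n M in \<open>auto simp: add_pos_nonneg\<close>)
    moreover have "2 * K * W / (n + 1) + (n - 1) / (n + 1) * W\<^sup>2 + M\<^sup>2 = 2 * C"
      by (simp add: C_def)
    ultimately have "Epot_abs f \<le> ennreal (1 / 2) * ennreal (2 * C * (1 + enn2real (Pfun Q f)) powr (n / 3))"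
      unfolding Epot_abs_def by (intro mult_left_mono) auto
    also have "ennreal (1 / 2) * ennreal (2 * C * (1 + enn2real (Pfun Q f)) powr (n / 3))
        = ennreal (C * (1 + enn2real (Pfun Q f)) powr (n / 3))"
      using \<open>0 < C\<close> by (subst ennreal_mult[symmetric]) auto
    finally show ?thesis .
  qed
  ultimately show ?thesis using that by (simp add: n_def)
qed

lemma HC_ge_of_Epot_abs_le:
  assumes "Pfun Q f < \<infinity>" "Epot_abs f \<le> ennreal B" "0 \<le> B"
  shows "ereal (enn2real (Pfun Q f) - B) \<le> HC Q f"
proof -
  obtain P where P: "Pfun Q f = ennreal P" "0 \<le> P"
    using assms(1) by (cases "Pfun Q f") auto
  have "Epot_abs f \<noteq> \<infinity>" using assms(2) by (auto simp: top_unique)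
  then obtain e where e: "Epot_abs f = ennreal e" "0 \<le> e"
    by (cases "Epot_abs f") auto
  have "e \<le> B" using assms(2,3) unfolding e(1) by (simp add: ennreal_le_iff)
  have "HC Q f = ereal P - ereal e"
    unfolding HC_def P(1) e(1) using P(2) e(2) by simp
  also have "\<dots> = ereal (P - e)" by simp
  finally show ?thesis using \<open>e \<le> B\<close> P by simp
qed

lemma INF_gt_minus_infinity_of_sublinear:
  fixes h :: "'f \<Rightarrow> ereal" and p :: "'f \<Rightarrow> real" and C g :: real
  assumes C: "0 < C" and g: "0 < g" "g < 1"
    and p: "\<And>f. f \<in> S \<Longrightarrow> 0 \<le> p f"
    and h: "\<And>f. f \<in> S \<Longrightarrow> ereal (p f - C * (1 + p f) powr g) \<le> h f"
  shows "(INF f \<in> S. h f) > - \<infinity>"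
proof -
  obtain D where D: "\<And>t. 0 \<le> t \<Longrightarrow> - D \<le> t - C * (1 + t) powr g"
    using sublinear_perturbation_bounded_below[OF C g] by blast
  have "ereal (- D) \<le> (INF f \<in> S. h f)"
  proof (rule INF_greatest)
    fix f assume f: "f \<in> S"
    have "ereal (- D) \<le> ereal (p f - C * (1 + p f) powr g)"
      using D[OF p[OF f]] by simp
    also have "\<dots> \<le> h f" by (rule h[OF f])
    finally show "ereal (- D) \<le> h f" .
  qed
  then show ?thesis by (rule less_le_trans[rotated]) simp
qed

theorem lemma2:
  fixes Q Q' Q'' :: "real \<Rightarrow> real" and C1 C2 F0 k1 k2 k3 M :: real
  assumes Q_C1: "\<And>s. s \<ge> 0 \<Longrightarrow> (Q has_real_derivative Q' s) (at s within {0..})"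
      and Q'_cont: "continuous_on {0..} Q'"
      and Q_C2: "\<And>s. s > 0 \<Longrightarrow> (Q' has_real_derivative Q'' s) (at s)"
      and Q''_cont: "continuous_on {0<..} Q''"
      and Q_nonneg: "\<And>s. s \<ge> 0 \<Longrightarrow> Q s \<ge> 0"
      and constants: "C1 > 0" "C2 > 0" "F0 > 0"
        "0 < k1" "k1 < 3/2" "0 < k2" "k2 < 3/2" "0 < k3" "k3 < 3/2"
      and Q1: "\<And>s. s \<ge> F0 \<Longrightarrow> Q s \<ge> C1 * s powr (1 + 1/k1)"
      and Q2: "\<And>s. 0 \<le> s \<Longrightarrow> s \<le> F0 \<Longrightarrow> Q s \<le> C2 * s powr (1 + 1/k2)"
      and Q3: "\<And>s lam. s \<ge> 0 \<Longrightarrow> 0 \<le> lam \<Longrightarrow> lam \<le> 1 \<Longrightarrow> Q (lam * s) \<ge> lam powr (1 + 1/k3) * Q s"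
      and Q4: "\<And>s. s > 0 \<Longrightarrow> Q'' s > 0" "Q' 0 = 0"
      and M: "M > 0"
  shows "(\<exists>C>0. \<forall>f \<in> FM Q M.
            HC Q f \<ge> ereal (enn2real (Pfun Q f) - C * (1 + enn2real (Pfun Q f)) powr ((k1 + 3/2) / 3)))
         \<and> (INF f \<in> FM Q M. HC Q f) > - \<infinity>"
proof -
  have Q_cont: "continuous_on {0..} Q"
    by (rule DERIV_continuous_on) (use Q_C1 in auto)
  obtain C where C: "0 < C"
    and Epot: "\<And>f. f \<in> FM Q M
      \<Longrightarrow> Epot_abs f \<le> ennreal (C * (1 + enn2real (Pfun Q f)) powr ((k1 + 3/2) / 3))"
    using Epot_abs_le_powr[OF constants(1,3,4,5) M Q_nonneg Q1 Q_cont] by blast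
  have HC_bound: "ereal (enn2real (Pfun Q f) - C * (1 + enn2real (Pfun Q f)) powr ((k1 + 3/2) / 3)) \<le> HC Q f"
    if "f \<in> FM Q M" for f
    using that Epot[OF that] C by (intro HC_ge_of_Epot_abs_le) (auto simp: FM_def)
  moreover have "(INF f \<in> FM Q M. HC Q f) > - \<infinity>"
    using C constants by (intro INF_gt_minus_infinity_of_sublinear[OF C _ _ _ HC_bound]) auto
  ultimately show ?thesis using C by blast
qed

end
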